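(* In the standing setting, for every $A'\in Q'$ we have $g(g'(A'))=A'$.
   Context: Standing setting: $(P,\preceq)$ is a finite poset with a bottom and a top element; $f:P\to P'$ is a surjective map onto $P'=f(P)$; $f^{-1}(a')=\{a\in P: f(a)=a'\}$; the relation $\preceq'$ on $P'$ is defined by $b'\preceq' a'$ iff there exist $a\in f^{-1}(a')$, $b\in f^{-1}(b')$ with $b\preceq a$. Assume the three conditions: (D) for all $a',b'\in P'$ with $b'\preceq' a'$ and every $a\in f^{-1}(a')$ there is $b\in f^{-1}(b')$ with $b\preceq a$; (U) for all $a',b'\in P'$ with $b'\preceq' a'$ and every $b\in f^{-1}(b')$ there is $a\in f^{-1}(a')$ with $b\preceq a$; (S) for all $a,b,c\in P$, if $c\preceq b\preceq a$ and $f(c)=f(a)$ then $f(b)=f(a)$. (Then $(P',\preceq')$ is a poset.) A down-set of a poset is a subset $A$ such that $a\in A$ and $b\preceq a$ imply $b\in A$. $Q$ is the set of nonempty down-sets of $(P,\preceq)$ and $Q'$ the set of nonempty down-sets of $(P',\preceq')$, each ordered by inclusion. $g:2^P\to 2^{P'}$ is $g(A)=\{f(a):a\in A\}$. For $A'\in Q'$, $g^{-1}(A')=\{A\in Q: g(A)=A'\}$ and $g'(A')=\bigcup_{A\in g^{-1}(A')}A$. *)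

theory Defs
  imports Main
begin

definition finite_bounded_poset :: "'a set \<Rightarrow> ('a \<Rightarrow> 'a \<Rightarrow> bool) \<Rightarrow> bool" where
  "finite_bounded_poset P le \<longleftrightarrow>
     finite P \<and>
     (\<forall>a\<in>P. le a a) \<and>
     (\<forall>a\<in>P. \<forall>b\<in>P. le a b \<and> le b a \<longrightarrow> a = b) \<and>
     (\<forall>a\<in>P. \<forall>b\<in>P. \<forall>c\<in>P. le a b \<and> le b c \<longrightarrow> le a c) \<and>
     (\<exists>bot\<in>P. \<forall>a\<in>P. le bot a) \<and>
     (\<exists>top\<in>P. \<forall>a\<in>P. le a top)"

definition fib :: "'a set \<Rightarrow> ('a \<Rightarrow> 'b) \<Rightarrow> 'b \<Rightarrow> 'a set" where
  "fib P f a' = {a\<in>P. f a = a'}"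

definition induced_le :: "'a set \<Rightarrow> ('a \<Rightarrow> 'a \<Rightarrow> bool) \<Rightarrow> ('a \<Rightarrow> 'b) \<Rightarrow> 'b \<Rightarrow> 'b \<Rightarrow> bool" where
  "induced_le P le f b' a' \<longleftrightarrow> (\<exists>a\<in>fib P f a'. \<exists>b\<in>fib P f b'. le b a)"

definition cond_D :: "'a set \<Rightarrow> ('a \<Rightarrow> 'a \<Rightarrow> bool) \<Rightarrow> ('a \<Rightarrow> 'b) \<Rightarrow> bool" where
  "cond_D P le f \<longleftrightarrow> (\<forall>a'\<in>f ` P. \<forall>b'\<in>f ` P. induced_le P le f b' a' \<longrightarrow>
      (\<forall>a\<in>fib P f a'. \<exists>b\<in>fib P f b'. le b a))"

definition cond_U :: "'a set \<Rightarrow> ('a \<Rightarrow> 'a \<Rightarrow> bool) \<Rightarrow> ('a \<Rightarrow> 'b) \<Rightarrow> bool" where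
  "cond_U P le f \<longleftrightarrow> (\<forall>a'\<in>f ` P. \<forall>b'\<in>f ` P. induced_le P le f b' a' \<longrightarrow>
      (\<forall>b\<in>fib P f b'. \<exists>a\<in>fib P f a'. le b a))"

definition cond_S :: "'a set \<Rightarrow> ('a \<Rightarrow> 'a \<Rightarrow> bool) \<Rightarrow> ('a \<Rightarrow> 'b) \<Rightarrow> bool" where
  "cond_S P le f \<longleftrightarrow> (\<forall>a\<in>P. \<forall>b\<in>P. \<forall>c\<in>P. le c b \<and> le b a \<and> f c = f a \<longrightarrow> f b = f a)"

definition down_set :: "'a set \<Rightarrow> ('a \<Rightarrow> 'a \<Rightarrow> bool) \<Rightarrow> 'a set \<Rightarrow> bool" where
  "down_set X r A \<longleftrightarrow> A \<subseteq> X \<and> (\<forall>a\<in>A. \<forall>b\<in>X. r b a \<longrightarrow> b \<in> A)"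

definition nonempty_down_sets :: "'a set \<Rightarrow> ('a \<Rightarrow> 'a \<Rightarrow> bool) \<Rightarrow> 'a set set" where
  "nonempty_down_sets X r = {A. down_set X r A \<and> A \<noteq> {}}"

definition gmap :: "('a \<Rightarrow> 'b) \<Rightarrow> 'a set \<Rightarrow> 'b set" where
  "gmap f A = f ` A"

definition gprime :: "'a set \<Rightarrow> ('a \<Rightarrow> 'a \<Rightarrow> bool) \<Rightarrow> ('a \<Rightarrow> 'b) \<Rightarrow> 'b set \<Rightarrow> 'a set" where
  "gprime P le f A' = \<Union> {A \<in> nonempty_down_sets P le. gmap f A = A'}"

end

theory Submission
  imports Defs
begin

text \<open>The preimage B = f\<inverse>(A') \<inter> P of a down-set A' of P' is a down-set of P with f(B) = A', and
  every set A \<subseteq> P with f(A) = A' lies inside it. Hence B is the largest member of g\<inverse>(A'),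
  so g'(A') = B and g(g'(A')) = f(B) = A'.\<close>

lemma down_set_vimage_induced:
  assumes "down_set (f ` P) (induced_le P le f) A'"
  shows "down_set P le {a \<in> P. f a \<in> A'}"
  unfolding down_set_def
proof (intro conjI ballI impI)
  fix a b assume a: "a \<in> {a \<in> P. f a \<in> A'}" and b: "b \<in> P" and "le b a"
  then have "induced_le P le f (f b) (f a)"
    unfolding induced_le_def fib_def by auto
  with assms a b show "b \<in> {a \<in> P. f a \<in> A'}"
    unfolding down_set_def by auto
qed auto

lemma gmap_vimage:
  assumes "A' \<subseteq> f ` P"
  shows "gmap f {a \<in> P. f a \<in> A'} = A'"
  using assms unfolding gmap_def by auto

lemma gprime_eq_vimage:
  assumes "A' \<in> nonempty_down_sets (f ` P) (induced_le P le f)"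
  shows "gprime P le f A' = {a \<in> P. f a \<in> A'}"
proof
  show "gprime P le f A' \<subseteq> {a \<in> P. f a \<in> A'}"
    unfolding gprime_def gmap_def nonempty_down_sets_def down_set_def by auto
next
  have A': "down_set (f ` P) (induced_le P le f) A'" "A' \<noteq> {}"
    using assms unfolding nonempty_down_sets_def by auto
  then have "A' \<subseteq> f ` P"
    unfolding down_set_def by simp
  with A' have "{a \<in> P. f a \<in> A'} \<in> {A \<in> nonempty_down_sets P le. gmap f A = A'}"
    using down_set_vimage_induced[OF A'(1)] gmap_vimage[of A' f P]
    unfolding nonempty_down_sets_def by auto
  then show "{a \<in> P. f a \<in> A'} \<subseteq> gprime P le f A'"
    unfolding gprime_def by blast
qed

theorem lemma9:
  fixes P :: "'a set" and le :: "'a \<Rightarrow> 'a \<Rightarrow> bool" and f :: "'a \<Rightarrow> 'b" and A' :: "'b set"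
  assumes "finite_bounded_poset P le"
    and "cond_D P le f" and "cond_U P le f" and "cond_S P le f"
    and "A' \<in> nonempty_down_sets (f ` P) (induced_le P le f)"
  shows "gmap f (gprime P le f A') = A'"
proof -
  have "A' \<subseteq> f ` P"
    using assms(5) unfolding nonempty_down_sets_def down_set_def by simp
  then show ?thesis
    using gprime_eq_vimage[OF assms(5)] gmap_vimage by simp
qed

end
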